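(* Let $n\ge 3$, $0<m<\frac{n-2}{n}$, $m\ne\frac{n-2}{n+2}$, $\lambda>0$, $\beta>0$. Let $v$ be the radially symmetric solution described in the context, $w(s)=r^2v(r)^{1-m}$ with $s=\log r$, $h(s)=w(s)-\frac{2(n-1)(n-2-nm)}{(1-m)\beta}s$, and $h_1(s)=h(s)+\frac{(n-1)[n-2-(n+2)m]}{(1-m)\beta}\log s$. Then the limit $K(\lambda,\beta):=\lim_{s\to\infty}h_1(s)$ exists in $\mathbb{R}$, and \[ h_1(s)=K(\lambda,\beta)+\frac{(n-1)(n-2-(n+2)m)^2}{2(n-2-nm)(1-m)\beta}\cdot\frac{1+\log s}{s}+o\Big(\frac{1+\log s}{s}\Big)\quad\text{as }s\to\infty. \]
   Context: $v=v(r)$, $r=|x|$, is the unique radially symmetric positive classical solution of $\frac{n-1}{m}\Delta v^m+\frac{2\beta}{1-m}v+\beta x\cdot\nabla v=0$ in $\mathbb{R}^n$ with $v(0)=\lambda$. *)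

theory Defs
  imports "HOL-Analysis.Analysis" "HOL-Library.Landau_Symbols"
begin

definition classical_sol ::
  "real \<Rightarrow> real \<Rightarrow> (real^'n \<Rightarrow> real) \<Rightarrow> bool" where
  "classical_sol m \<beta> V \<longleftrightarrow>
     (\<exists>DV DU (D2U :: real^'n \<Rightarrow> real^'n^'n).
        continuous_on UNIV V \<and> continuous_on UNIV DV \<and>
        continuous_on UNIV DU \<and> continuous_on UNIV D2U \<and>
        (\<forall>x. (V has_derivative (\<lambda>h. DV x \<bullet> h)) (at x)) \<and>
        (\<forall>x. ((\<lambda>y. V y powr m) has_derivative (\<lambda>h. DU x \<bullet> h)) (at x)) \<and>
        (\<forall>x. (DU has_derivative (\<lambda>h. D2U x *v h)) (at x)) \<and>
        (\<forall>x. (real CARD('n) - 1) / m * (\<Sum>i\<in>UNIV. D2U x $ i $ i)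
              + 2 * \<beta> / (1 - m) * V x + \<beta> * (x \<bullet> DV x) = 0))"

end

theory Submission
  imports Defs "HOL-Real_Asymp.Real_Asymp"
begin

text \<open>In the variable s = log r the functions w = r^2 v^(1-m) and g = w'/w solve the autonomous
  system w' = g w, g' = A - c g - q g^2 - \<kappa> g w with A = 2c + 4q > 0. Barrier arguments show that
  g becomes positive, that w tends to infinity and hence g to 0, and, once w grows linearly, that
  g = O(1/s). The function E = w - a s + b log w + g/\<kappa> (a = A/\<kappa>, b = c/\<kappa>) has derivative
  -q g^2/\<kappa>, so it converges at rate 1/s and w/s tends to a. Writing w = a s (1 + x) with
  x = O(log s / s), the identity h1 = E - b log a - b log(1 + x) - g/\<kappa> together with
  log(1 + x) = x + O(x^2) yields the expansion, the term -b x contributing (b^2/a) log s / s.\<close>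

section \<open>Differential inequalities on a half-line\<close>

lemma negative_if_decreasing_at_zeros:
  fixes f f' :: "real \<Rightarrow> real"
  assumes der: "\<And>t. a \<le> t \<Longrightarrow> (f has_real_derivative f' t) (at t)"
    and start: "f a < 0"
    and zeros: "\<And>t. a \<le> t \<Longrightarrow> f t = 0 \<Longrightarrow> f' t < 0"
    and "a \<le> t"
  shows "f t < 0"
proof (rule ccontr)
  assume "\<not> f t < 0"
  have cont: "continuous_on {a..t} f"
    using der by (meson DERIV_continuous atLeastAtMost_iff continuous_at_imp_continuous_on)
  define S where "S = {x \<in> {a..t}. f x = 0}"
  have "S \<noteq> {}"
    using IVT'[of f a 0 t] start \<open>\<not> f t < 0\<close> \<open>a \<le> t\<close> cont by (auto simp: S_def)
  moreover have "closed S"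
    unfolding S_def by (rule continuous_closed_preimage_constant[OF cont]) auto
  moreover have bdd: "bdd_below S" unfolding S_def by (auto intro: bdd_belowI[of _ a])
  ultimately have "Inf S \<in> S" using closed_contains_Inf by blast
  define z where "z = Inf S"
  have z: "a < z" "z \<le> t" "f z = 0"
    using \<open>Inf S \<in> S\<close> start unfolding z_def S_def by (auto simp: order.order_iff_strict)
  have before: "f x < 0" if x: "a \<le> x" "x < z" for x
  proof (rule ccontr)
    assume "\<not> f x < 0"
    have "continuous_on {a..x} f" using continuous_on_subset[OF cont] x z by auto
    then obtain y where "y \<in> {a..x}" "f y = 0"
      using IVT'[of f a 0 x] start x \<open>\<not> f x < 0\<close> by auto
    hence "y \<in> S" using x z by (auto simp: S_def)
    hence "z \<le> y" unfolding z_def using bdd by (simp add: cInf_lower)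
    thus False using \<open>y \<in> {a..x}\<close> x by auto
  qed
  \<comment> \<open>At the first zero z, f' z < 0 forces f > 0 just before z.\<close>
  have "f' z < 0" using zeros z by simp
  then obtain d where d: "d > 0" "\<And>h. 0 < h \<Longrightarrow> h < d \<Longrightarrow> f z < f (z - h)"
    using DERIV_neg_dec_left[OF der[of z]] z by auto
  define h where "h = min d (z - a) / 2"
  have "0 < h" "h < d" "h \<le> z - a" using d z by (auto simp: h_def)
  thus False using d(2)[of h] before[of "z - h"] z by auto
qed

lemma DERIV_ge_imp_increment_ge:
  fixes f f' :: "real \<Rightarrow> real"
  assumes "a \<le> b"
    and der: "\<And>x. a \<le> x \<Longrightarrow> x \<le> b \<Longrightarrow> (f has_real_derivative f' x) (at x)"
    and bound: "\<And>x. a \<le> x \<Longrightarrow> x \<le> b \<Longrightarrow> c \<le> f' x"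
  shows "c * (b - a) \<le> f b - f a"
proof -
  have "f a - c * a \<le> f b - c * b"
  proof (rule DERIV_nonneg_imp_increasing_open[OF \<open>a \<le> b\<close>])
    fix x assume "a < x" "x < b"
    thus "\<exists>y. ((\<lambda>x. f x - c * x) has_real_derivative y) (at x) \<and> 0 \<le> y"
      using der[of x] bound[of x]
      by (intro exI[of _ "f' x - c"]) (auto intro!: derivative_eq_intros)
  next
    have "continuous_on {a..b} f"
      using der by (meson DERIV_continuous atLeastAtMost_iff continuous_at_imp_continuous_on)
    thus "continuous_on {a..b} (\<lambda>x. f x - c * x)" by (intro continuous_intros)
  qed
  thus ?thesis by (simp add: algebra_simps)
qed

lemma DERIV_le_imp_increment_le:
  fixes f f' :: "real \<Rightarrow> real"
  assumes "a \<le> b"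
    and der: "\<And>x. a \<le> x \<Longrightarrow> x \<le> b \<Longrightarrow> (f has_real_derivative f' x) (at x)"
    and bound: "\<And>x. a \<le> x \<Longrightarrow> x \<le> b \<Longrightarrow> f' x \<le> c"
  shows "f b - f a \<le> c * (b - a)"
proof -
  have "- c * (b - a) \<le> - f b - - f a"
    using der bound
    by (intro DERIV_ge_imp_increment_ge[OF \<open>a \<le> b\<close>, of "\<lambda>x. - f x" "\<lambda>x. - f' x"])
       (auto intro: DERIV_minus)
  thus ?thesis by simp
qed

lemma eventually_less_if_decreasing_above:
  fixes f f' :: "real \<Rightarrow> real"
  assumes der: "\<And>t. a \<le> t \<Longrightarrow> (f has_real_derivative f' t) (at t)"
    and "c > 0"
    and decr: "\<And>t. a \<le> t \<Longrightarrow> \<epsilon> \<le> f t \<Longrightarrow> f' t \<le> - c"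
  shows "\<exists>b\<ge>a. \<forall>t\<ge>b. f t < \<epsilon>"
proof -
  have "\<exists>b\<ge>a. f b < \<epsilon>"
  proof (rule ccontr)
    assume "\<not> ?thesis"
    hence above: "\<And>t. a \<le> t \<Longrightarrow> \<epsilon> \<le> f t" by (simp add: not_less)
    define t where "t = a + (f a - \<epsilon>) / c + 1"
    have "a \<le> t" using above[of a] \<open>c > 0\<close> by (simp add: t_def)
    have "f t - f a \<le> - c * (t - a)"
      using der decr above \<open>a \<le> t\<close> by (intro DERIV_le_imp_increment_le) auto
    moreover have "f a - \<epsilon> < c * (t - a)" using \<open>c > 0\<close> by (simp add: t_def field_simps)
    ultimately show False using above[OF \<open>a \<le> t\<close>] by simp
  qed
  then obtain b where b: "a \<le> b" "f b < \<epsilon>" by auto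
  have "f t - \<epsilon> < 0" if "b \<le> t" for t
  proof (rule negative_if_decreasing_at_zeros[of b "\<lambda>t. f t - \<epsilon>" f'])
    show "((\<lambda>t. f t - \<epsilon>) has_real_derivative f' t) (at t)" if "b \<le> t" for t
      using der[of t] b that by (auto intro!: derivative_eq_intros)
    show "f' t < 0" if "b \<le> t" "f t - \<epsilon> = 0" for t
      using decr[of t] b that \<open>c > 0\<close> by simp
  qed (use b that in auto)
  thus ?thesis using b by auto
qed

lemma tendsto_div_at_top_0_if_DERIV_tendsto_0:
  fixes f f' :: "real \<Rightarrow> real"
  assumes "\<And>s. (f has_real_derivative f' s) (at s)" and "(f' \<longlongrightarrow> 0) at_top"
  shows "((\<lambda>s. f s / s) \<longlongrightarrow> 0) at_top"
  by (rule lhospital_at_top_at_top[of "\<lambda>x. x" "\<lambda>_. 1" f f'])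
     (use assms in \<open>auto intro!: filterlim_ident derivative_eq_intros\<close>)

lemma tendsto_if_antimono_with_mono_correction:
  fixes E \<phi> :: "real \<Rightarrow> real"
  assumes anti: "\<And>s t. a \<le> s \<Longrightarrow> s \<le> t \<Longrightarrow> E t \<le> E s"
    and mono: "\<And>s t. a \<le> s \<Longrightarrow> s \<le> t \<Longrightarrow> E s - \<phi> s \<le> E t - \<phi> t"
    and nonneg: "\<And>t. a \<le> t \<Longrightarrow> 0 \<le> \<phi> t"
    and lim: "(\<phi> \<longlongrightarrow> 0) at_top"
  shows "\<exists>L. (E \<longlongrightarrow> L) at_top \<and> (\<forall>t\<ge>a. E t - \<phi> t \<le> L \<and> L \<le> E t)"
proof -
  have lower: "E s - \<phi> s \<le> E t" if "a \<le> s" "a \<le> t" for s t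
  proof (cases "s \<le> t")
    case True
    thus ?thesis using mono[of s t] nonneg[of t] that by simp
  next
    case False
    thus ?thesis using anti[of t s] nonneg[of s] that by simp
  qed
  define L where "L = Inf (E ` {a..})"
  have bdd: "bdd_below (E ` {a..})"
    using lower[of a] by (intro bdd_belowI[of _ "E a - \<phi> a"]) auto
  have upper: "L \<le> E t" if "a \<le> t" for t
    unfolding L_def using that bdd by (intro cInf_lower) auto
  have below: "E s - \<phi> s \<le> L" if "a \<le> s" for s
    unfolding L_def using that lower by (intro cInf_greatest) auto
  have "(E \<longlongrightarrow> L) at_top"
  proof (rule tendsto_sandwich[of "\<lambda>_. L" _ _ "\<lambda>t. L + \<phi> t"])
    show "eventually (\<lambda>t. L \<le> E t) at_top"
      using upper unfolding eventually_at_top_linorder by blast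
    show "eventually (\<lambda>t. E t \<le> L + \<phi> t) at_top"
      using below unfolding eventually_at_top_linorder by (metis add.commute diff_le_eq)
    show "((\<lambda>t. L + \<phi> t) \<longlongrightarrow> L) at_top"
      using tendsto_add[OF tendsto_const lim] by simp
  qed simp
  thus ?thesis using upper below by blast
qed

section \<open>The autonomous system in logarithmic variables\<close>

text \<open>The equations satisfied by w = r^2 v^(1-m) and g = w'/w as functions of s = log r
  (lemma radial_solution_log_system); of the behaviour at r = 0 only g s0 > 0 is retained.\<close>

locale log_system =
  fixes w g :: "real \<Rightarrow> real" and c q \<kappa> s\<^sub>0 :: real
  assumes \<kappa>_pos: "\<kappa> > 0" and q_pos: "q > 0" and c_q_pos: "c + 2 * q > 0"
    and w_pos: "\<And>s. w s > 0"
    and w_deriv: "\<And>s. (w has_real_derivative g s * w s) (at s)"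
    and g_deriv: "\<And>s. (g has_real_derivative
                        2 * c + 4 * q - c * g s - q * (g s)\<^sup>2 - \<kappa> * g s * w s) (at s)"
    and g_pos_start: "g s\<^sub>0 > 0"
begin

definition A where "A = 2 * c + 4 * q"

definition G where "G s = A - c * g s - q * (g s)\<^sup>2 - \<kappa> * g s * w s"

lemma g_has_deriv_G: "(g has_real_derivative G s) (at s)"
  using g_deriv unfolding G_def A_def .

lemma A_pos: "A > 0"
  using c_q_pos by (simp add: A_def)

lemma g_pos:
  assumes "s\<^sub>0 \<le> s" shows "0 < g s"
proof -
  have "- g s < 0"
  proof (rule negative_if_decreasing_at_zeros[of s\<^sub>0 "\<lambda>s. - g s" "\<lambda>s. - G s"])
    show "((\<lambda>s. - g s) has_real_derivative - G t) (at t)" for t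
      using g_has_deriv_G by (rule DERIV_minus)
  qed (use g_pos_start A_pos assms in \<open>auto simp: G_def\<close>)
  thus ?thesis by simp
qed

lemma ln_w_deriv: "((\<lambda>s. ln (w s)) has_real_derivative g s) (at s)"
  by (rule DERIV_cong[OF DERIV_chain2[OF DERIV_ln_divide[OF w_pos] w_deriv]])
     (use w_pos[of s] in simp)

lemma w_mono: "s\<^sub>0 \<le> s \<Longrightarrow> s \<le> t \<Longrightarrow> w s \<le> w t"
  using DERIV_ge_imp_increment_ge[of s t w "\<lambda>x. g x * w x" 0] w_deriv g_pos w_pos
  by (smt (verit) mult_pos_pos)

text \<open>While w stays bounded, g is pushed upwards whenever it is small.\<close>

lemma g_eventually_bounded_below_if_w_bounded:
  assumes w_le: "\<And>s. s\<^sub>0 \<le> s \<Longrightarrow> w s \<le> W"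
  shows "\<exists>\<delta>>0. \<exists>a\<ge>s\<^sub>0. \<forall>t\<ge>a. \<delta> < g t"
proof -
  have "W > 0" using w_le[of s\<^sub>0] w_pos[of s\<^sub>0] by simp
  define L where "L = \<bar>c\<bar> + q + \<kappa> * W"
  have "L > 0" unfolding L_def using q_pos \<kappa>_pos \<open>W > 0\<close> by (smt (verit) mult_pos_pos)
  define \<delta> where "\<delta> = min 1 (A / (2 * L))"
  have "\<delta> > 0" unfolding \<delta>_def using A_pos \<open>L > 0\<close> by simp
  have G_ge: "A / 2 \<le> G t" if t: "s\<^sub>0 \<le> t" "g t \<le> \<delta>" for t
  proof -
    have g: "0 < g t" "g t \<le> 1" "g t \<le> A / (2 * L)" using g_pos t unfolding \<delta>_def by auto
    have "c * g t \<le> \<bar>c\<bar> * g t" using g by (simp add: mult_right_mono)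
    moreover have "q * (g t)\<^sup>2 \<le> q * g t" using g q_pos
      by (simp add: power2_eq_square mult_left_mono mult_le_cancel_left1)
    moreover have "\<kappa> * g t * w t \<le> \<kappa> * W * g t" using w_le[OF t(1)] g \<kappa>_pos
      by (simp add: mult_left_mono mult_right_mono mult.commute mult.left_commute)
    moreover have "L * g t \<le> A / 2" using g(3) \<open>L > 0\<close> by (simp add: field_simps)
    ultimately show ?thesis unfolding G_def L_def by (simp add: algebra_simps)
  qed
  have "\<exists>a\<ge>s\<^sub>0. \<forall>t\<ge>a. - g t < - \<delta>"
  proof (rule eventually_less_if_decreasing_above[of s\<^sub>0 _ "\<lambda>t. - G t" "A / 2"])
    show "((\<lambda>s. - g s) has_real_derivative - G t) (at t)" for t
      using g_has_deriv_G by (rule DERIV_minus)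
    show "- G t \<le> - (A / 2)" if "s\<^sub>0 \<le> t" "- \<delta> \<le> - g t" for t
      using G_ge[of t] that by simp
  qed (use A_pos in simp)
  then obtain a where "a \<ge> s\<^sub>0" "\<forall>t\<ge>a. - g t < - \<delta>" by blast
  thus ?thesis using \<open>\<delta> > 0\<close> by auto
qed

lemma w_unbounded: "\<exists>s\<ge>s\<^sub>0. W < w s"
proof (rule ccontr)
  assume "\<not> ?thesis"
  hence w_le: "\<And>s. s\<^sub>0 \<le> s \<Longrightarrow> w s \<le> W" by (simp add: not_less)
  then obtain \<delta> a where "\<delta> > 0" "a \<ge> s\<^sub>0" and g_ge: "\<And>t. a \<le> t \<Longrightarrow> \<delta> < g t"
    using g_eventually_bounded_below_if_w_bounded by blast
  define t where "t = a + (ln W - ln (w a)) / \<delta> + 1"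
  have "W > 0" using w_le[of s\<^sub>0] w_pos[of s\<^sub>0] by simp
  have "ln (w a) \<le> ln W" using w_le[of a] \<open>a \<ge> s\<^sub>0\<close> w_pos[of a] \<open>W > 0\<close> by simp
  hence "a \<le> t" unfolding t_def using \<open>\<delta> > 0\<close> by simp
  have "\<delta> * (t - a) \<le> ln (w t) - ln (w a)"
    by (rule DERIV_ge_imp_increment_ge[OF \<open>a \<le> t\<close> ln_w_deriv])
       (use g_ge in \<open>auto intro: less_imp_le\<close>)
  moreover have "ln W - ln (w a) < \<delta> * (t - a)" unfolding t_def using \<open>\<delta> > 0\<close>
    by (simp add: field_simps)
  ultimately have "ln W < ln (w t)" by simp
  hence "W < w t" using w_pos[of t] \<open>W > 0\<close> by simp
  thus False using w_le[of t] \<open>a \<le> t\<close> \<open>a \<ge> s\<^sub>0\<close> by simp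
qed

lemma w_tendsto_at_top: "filterlim w at_top at_top"
  unfolding filterlim_at_top eventually_at_top_linorder
proof
  fix Z
  obtain s where "s \<ge> s\<^sub>0" "w s > Z" using w_unbounded by auto
  thus "\<exists>N. \<forall>n\<ge>N. Z \<le> w n" using w_mono by (meson less_imp_le order_trans)
qed

lemma g_tendsto_0: "(g \<longlongrightarrow> 0) at_top"
  unfolding tendsto_iff
proof (intro allI impI)
  fix \<epsilon> :: real assume "\<epsilon> > 0"
  obtain s where s: "\<And>t. s \<le> t \<Longrightarrow> (2 * A / \<epsilon> + \<bar>c\<bar>) / \<kappa> \<le> w t"
    using w_tendsto_at_top unfolding filterlim_at_top eventually_at_top_linorder by blast
  define s' where "s' = max s\<^sub>0 s"
  have G_le: "G t \<le> - A" if t: "s' \<le> t" "\<epsilon> \<le> g t" for t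
  proof -
    have g: "g t > 0" using g_pos[of t] t by (simp add: s'_def)
    have "2 * A / \<epsilon> + \<bar>c\<bar> \<le> \<kappa> * w t" using s[of t] t \<kappa>_pos
      by (simp add: s'_def field_simps)
    hence "g t * (2 * A / \<epsilon> + \<bar>c\<bar>) \<le> g t * (\<kappa> * w t)"
      using g by (intro mult_left_mono) auto
    hence "g t * (2 * A / \<epsilon> + \<bar>c\<bar>) \<le> \<kappa> * g t * w t" by (simp add: mult_ac)
    moreover have "2 * A \<le> g t * (2 * A / \<epsilon>)" using t \<open>\<epsilon> > 0\<close> A_pos by (simp add: field_simps)
    moreover have "- c * g t \<le> \<bar>c\<bar> * g t" using g mult_right_mono[of "- c" "\<bar>c\<bar>" "g t"] by simp
    moreover have "q * (g t)\<^sup>2 \<ge> 0" using q_pos by simp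
    ultimately show ?thesis unfolding G_def by (simp add: algebra_simps)
  qed
  obtain a where "a \<ge> s'" "\<forall>t\<ge>a. g t < \<epsilon>"
    using eventually_less_if_decreasing_above[of s' g G A \<epsilon>, OF g_has_deriv_G A_pos G_le]
    by blast
  moreover have "\<forall>t\<ge>a. 0 < g t" using g_pos \<open>a \<ge> s'\<close> by (simp add: s'_def)
  ultimately show "eventually (\<lambda>t. dist (g t) 0 < \<epsilon>) at_top"
    unfolding eventually_at_top_linorder dist_real_def by (intro exI[of _ a]) auto
qed

definition slope where "slope = A / \<kappa>"

definition log_coeff where "log_coeff = c / \<kappa>"

text \<open>A Lyapunov function: E' = - q g^2 / \<kappa>.\<close>

definition E where "E s = w s - slope * s + log_coeff * ln (w s) + g s / \<kappa>"

lemma slope_pos: "slope > 0"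
  unfolding slope_def using A_pos \<kappa>_pos by simp

lemma E_deriv: "(E has_real_derivative - q * (g s)\<^sup>2 / \<kappa>) (at s)"
proof -
  have "(E has_real_derivative g s * w s - slope + log_coeff * g s + G s / \<kappa>) (at s)"
    unfolding E_def[abs_def]
    by (intro DERIV_add DERIV_diff DERIV_cmult DERIV_cdivide w_deriv ln_w_deriv g_has_deriv_G)
       (use DERIV_cmult[OF DERIV_ident, of slope] in simp)
  moreover have "g s * w s - slope + log_coeff * g s + G s / \<kappa> = - q * (g s)\<^sup>2 / \<kappa>"
    unfolding slope_def log_coeff_def G_def using \<kappa>_pos by (simp add: field_simps)
  ultimately show ?thesis by simp
qed

lemma E_antimono: "s \<le> t \<Longrightarrow> E t \<le> E s"
  using DERIV_le_imp_increment_le[of s t E "\<lambda>s. - q * (g s)\<^sup>2 / \<kappa>" 0] E_deriv q_pos \<kappa>_pos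
  by (simp add: divide_nonpos_pos)

lemma w_div_tendsto_slope: "((\<lambda>s. w s / s) \<longlongrightarrow> slope) at_top"
proof -
  have "((\<lambda>s. - q * (g s)\<^sup>2 / \<kappa>) \<longlongrightarrow> - q * 0\<^sup>2 / \<kappa>) at_top"
    by (intro tendsto_intros g_tendsto_0) (use \<kappa>_pos in simp)
  hence "((\<lambda>s. E s / s) \<longlongrightarrow> 0) at_top"
    by (intro tendsto_div_at_top_0_if_DERIV_tendsto_0[OF E_deriv]) simp
  moreover have "((\<lambda>s. ln (w s) / s) \<longlongrightarrow> 0) at_top"
    by (rule tendsto_div_at_top_0_if_DERIV_tendsto_0[OF ln_w_deriv g_tendsto_0])
  moreover have "((\<lambda>s. g s / \<kappa> / s) \<longlongrightarrow> 0) at_top"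
    by (rule tendsto_divide_0[OF tendsto_divide[OF g_tendsto_0 tendsto_const]])
       (use \<kappa>_pos filterlim_at_top_imp_at_infinity[OF filterlim_ident] in auto)
  ultimately have "((\<lambda>s. E s / s + slope - log_coeff * (ln (w s) / s) - g s / \<kappa> / s)
                     \<longlongrightarrow> 0 + slope - log_coeff * 0 - 0) at_top"
    by (intro tendsto_intros)
  moreover have "eventually (\<lambda>s. E s / s + slope - log_coeff * (ln (w s) / s) - g s / \<kappa> / s
                                = w s / s) at_top"
    using eventually_gt_at_top[of 0] by eventually_elim (simp add: E_def field_simps)
  ultimately show ?thesis using tendsto_cong by force
qed

lemma G_le_eventually: "\<exists>S. s\<^sub>0 \<le> S \<and> 8 / A + 1 \<le> S \<and> (\<forall>t\<ge>S. G t \<le> A - g t * (A * t / 4))"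
proof -
  obtain S\<^sub>1 where S\<^sub>1: "\<And>t. S\<^sub>1 \<le> t \<Longrightarrow> slope / 2 < w t / t"
    using order_tendstoD(1)[OF w_div_tendsto_slope, of "slope / 2"] slope_pos
    unfolding eventually_at_top_linorder by auto
  define S where "S = max (max s\<^sub>0 S\<^sub>1) (max (8 / A + 1) (4 * \<bar>c\<bar> / A))"
  have S: "s\<^sub>0 \<le> S" "S\<^sub>1 \<le> S" "8 / A + 1 \<le> S" "4 * \<bar>c\<bar> / A \<le> S"
    unfolding S_def by auto
  have "8 / A > 0" using A_pos by simp
  have "G t \<le> A - g t * (A * t / 4)" if t: "S \<le> t" for t
  proof -
    have "t > 0" using t S \<open>8 / A > 0\<close> by linarith
    have g: "g t > 0" using g_pos[of t] t S by simp
    have "slope / 2 * t < w t" using S\<^sub>1[of t] t S \<open>t > 0\<close> by (simp add: field_simps)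
    hence "A * t / 2 < \<kappa> * w t" using \<kappa>_pos unfolding slope_def by (simp add: field_simps)
    moreover have "4 * \<bar>c\<bar> \<le> A * t"
    proof -
      have "4 * \<bar>c\<bar> \<le> S * A" using S(4) A_pos by (simp add: field_simps)
      also have "\<dots> \<le> A * t" using mult_right_mono[OF t, of A] A_pos by (simp add: mult.commute)
      finally show ?thesis .
    qed
    ultimately have "\<bar>c\<bar> + A * t / 4 \<le> \<kappa> * w t" by linarith
    hence "g t * (\<bar>c\<bar> + A * t / 4) \<le> g t * (\<kappa> * w t)" using g by (intro mult_left_mono) auto
    moreover have "- c * g t \<le> \<bar>c\<bar> * g t" using g mult_right_mono[of "- c" "\<bar>c\<bar>" "g t"] by simp
    moreover have "q * (g t)\<^sup>2 \<ge> 0" using q_pos by simp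
    ultimately show ?thesis unfolding G_def by (simp add: algebra_simps)
  qed
  thus ?thesis using S by blast
qed

text \<open>Once w grows linearly, the damping term \<kappa> g w pins g below C/s.\<close>

lemma g_less_const_div: "\<exists>C S. 0 < C \<and> 1 \<le> S \<and> s\<^sub>0 \<le> S \<and> (\<forall>t\<ge>S. g t < C / t)"
proof -
  obtain S where S: "s\<^sub>0 \<le> S" "8 / A + 1 \<le> S" and G_le: "\<And>t. S \<le> t \<Longrightarrow> G t \<le> A - g t * (A * t / 4)"
    using G_le_eventually by blast
  have "8 / A > 0" using A_pos by simp
  hence "S \<ge> 1" using S(2) by linarith
  define C where "C = max 9 (S * g S + 1)"
  have "C \<ge> 9" unfolding C_def by simp
  have "g t - C * inverse t < 0" if "S \<le> t" for t
  proof (rule negative_if_decreasing_at_zeros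
      [of S "\<lambda>t. g t - C * inverse t" "\<lambda>t. G t + C * (inverse t)\<^sup>2"])
    show "g S - C * inverse S < 0"
      using \<open>S \<ge> 1\<close> by (simp add: C_def field_simps)
    show "((\<lambda>t. g t - C * inverse t) has_real_derivative G t + C * (inverse t)\<^sup>2) (at t)"
      if "S \<le> t" for t
      using that \<open>S \<ge> 1\<close> by (auto intro!: derivative_eq_intros g_has_deriv_G simp: power2_eq_square)
    fix t assume t: "S \<le> t" "g t - C * inverse t = 0"
    have "t > 0" using t \<open>S \<ge> 1\<close> by simp
    have "g t * t = C" using t(2) \<open>t > 0\<close> by (simp add: field_simps)
    hence "g t * (A * t / 4) = C * A / 4"
      by (metis mult.commute mult.left_commute times_divide_eq_right)
    hence "G t \<le> A - C * A / 4" using G_le[OF t(1)] by linarith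
    moreover have inv_sq: "(inverse t)\<^sup>2 \<le> A / 8"
    proof -
      have "8 / A \<le> t" "1 \<le> t" using t S \<open>S \<ge> 1\<close> by auto
      hence "8 / A \<le> t * t" by (smt (verit) mult_right_mono mult_cancel_right1)
      thus ?thesis using A_pos \<open>t > 0\<close> by (simp add: field_simps power2_eq_square)
    qed
    hence "C * (inverse t)\<^sup>2 \<le> C * A / 8"
      using mult_left_mono[OF inv_sq, of C] \<open>C \<ge> 9\<close> by simp
    moreover have "9 * A \<le> C * A" using mult_right_mono[OF \<open>C \<ge> 9\<close>, of A] A_pos by simp
    ultimately show "G t + C * (inverse t)\<^sup>2 < 0" using A_pos by linarith
  qed (use that in simp)
  hence "\<forall>t\<ge>S. g t < C / t" by (simp add: field_simps)
  thus ?thesis using S \<open>S \<ge> 1\<close> \<open>C \<ge> 9\<close> by (intro exI[of _ C] exI[of _ S]) auto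
qed

lemma g_bigo: "g \<in> O[at_top](\<lambda>s. 1 / s)"
proof -
  obtain C S where "0 < C" "1 \<le> S" "s\<^sub>0 \<le> S" and g_le: "\<And>t. S \<le> t \<Longrightarrow> g t < C / t"
    using g_less_const_div by blast
  have "norm (g t) \<le> C * norm (1 / t)" if "S \<le> t" for t
  proof -
    have "norm (g t) = g t" using g_pos[of t] that \<open>s\<^sub>0 \<le> S\<close> by simp
    moreover have "C * norm (1 / t) = C / t" using that \<open>1 \<le> S\<close> by simp
    ultimately show ?thesis using g_le[OF that] by linarith
  qed
  hence "eventually (\<lambda>t. norm (g t) \<le> C * norm (1 / t)) at_top"
    unfolding eventually_at_top_linorder by blast
  thus ?thesis by (rule bigoI)
qed

text \<open>The bound on g makes E' = - q g^2/\<kappa> of order 1/s^2, so E converges at rate 1/s.\<close>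

lemma E_tendsto_with_rate: "\<exists>L. (E \<longlongrightarrow> L) at_top \<and> (\<lambda>s. E s - L) \<in> O[at_top](\<lambda>s. 1 / s)"
proof -
  obtain C S where C: "0 < C" "1 \<le> S" "s\<^sub>0 \<le> S" and g_le: "\<And>t. S \<le> t \<Longrightarrow> g t < C / t"
    using g_less_const_div by blast
  define D where "D = q * C\<^sup>2 / \<kappa>"
  have "D > 0" unfolding D_def using q_pos \<kappa>_pos C by simp
  have mono: "E s - D / s \<le> E t - D / t" if "S \<le> s" "s \<le> t" for s t
  proof -
    have "0 * (t - s) \<le> (E t - D / t) - (E s - D / s)"
    proof (rule DERIV_ge_imp_increment_ge[OF that(2), of _ "\<lambda>x. - q * (g x)\<^sup>2 / \<kappa> + D / x\<^sup>2"])
      fix x assume x: "s \<le> x" "x \<le> t"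
      hence "x > 0" using that C by simp
      have "((\<lambda>x. D / x) has_real_derivative - D / x\<^sup>2) (at x)"
        using \<open>x > 0\<close> by (auto intro!: derivative_eq_intros simp: power2_eq_square)
      from DERIV_diff[OF E_deriv this]
      show "((\<lambda>x. E x - D / x) has_real_derivative - q * (g x)\<^sup>2 / \<kappa> + D / x\<^sup>2) (at x)"
        by simp
      have "(g x)\<^sup>2 \<le> (C / x)\<^sup>2" using g_pos[of x] g_le[of x] x that C by (intro power_mono) auto
      hence "q * (g x)\<^sup>2 / \<kappa> \<le> q * (C / x)\<^sup>2 / \<kappa>" using q_pos \<kappa>_pos
        by (intro divide_right_mono mult_left_mono) auto
      also have "\<dots> = D / x\<^sup>2" unfolding D_def by (simp add: field_simps)
      finally show "0 \<le> - q * (g x)\<^sup>2 / \<kappa> + D / x\<^sup>2" by simp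
    qed
    thus ?thesis by simp
  qed
  have "\<exists>L. (E \<longlongrightarrow> L) at_top \<and> (\<forall>t\<ge>S. E t - D / t \<le> L \<and> L \<le> E t)"
  proof (rule tendsto_if_antimono_with_mono_correction)
    show "((\<lambda>t. D / t) \<longlongrightarrow> 0) at_top"
      by (intro tendsto_divide_0[OF tendsto_const] filterlim_at_top_imp_at_infinity filterlim_ident)
    show "0 \<le> D / t" if "S \<le> t" for t
      using that C \<open>D > 0\<close> by simp
  qed (use E_antimono mono in blast)+
  then obtain L where lim: "(E \<longlongrightarrow> L) at_top" and L: "\<And>t. S \<le> t \<Longrightarrow> E t - D / t \<le> L \<and> L \<le> E t"
    by blast
  have "norm (E t - L) \<le> D * norm (1 / t)" if "S \<le> t" for t
  proof -
    have "norm (E t - L) \<le> D / t"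
      unfolding real_norm_def abs_le_iff using L[OF that] by linarith
    moreover have "D * norm (1 / t) = D / t" using that C by simp
    ultimately show ?thesis by linarith
  qed
  hence "eventually (\<lambda>t. norm (E t - L) \<le> D * norm (1 / t)) at_top"
    unfolding eventually_at_top_linorder by blast
  hence "(\<lambda>s. E s - L) \<in> O[at_top](\<lambda>s. 1 / s)" by (rule bigoI)
  thus ?thesis using lim by blast
qed

definition h\<^sub>1 where "h\<^sub>1 s = w s - slope * s + log_coeff * ln s"

lemma h\<^sub>1_eq: "s > 0 \<Longrightarrow> h\<^sub>1 s = E s - log_coeff * ln (w s / s) - g s / \<kappa>"
  unfolding h\<^sub>1_def E_def using w_pos[of s] by (simp add: ln_div algebra_simps)

lemma h\<^sub>1_tendsto:
  assumes "(E \<longlongrightarrow> L) at_top"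
  shows "(h\<^sub>1 \<longlongrightarrow> L - log_coeff * ln slope) at_top"
proof -
  have "((\<lambda>s. E s - log_coeff * ln (w s / s) - g s / \<kappa>) \<longlongrightarrow> L - log_coeff * ln slope - 0 / \<kappa>)
          at_top"
    by (intro tendsto_intros assms g_tendsto_0 w_div_tendsto_slope) (use slope_pos \<kappa>_pos in auto)
  moreover have "eventually (\<lambda>s. E s - log_coeff * ln (w s / s) - g s / \<kappa> = h\<^sub>1 s) at_top"
    using eventually_gt_at_top[of 0] by eventually_elim (simp add: h\<^sub>1_eq)
  ultimately show ?thesis using tendsto_cong by force
qed

lemma h\<^sub>1_bounded: "h\<^sub>1 \<in> O[at_top](\<lambda>_. 1)"
proof -
  obtain L where "(E \<longlongrightarrow> L) at_top" using E_tendsto_with_rate by blast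
  from h\<^sub>1_tendsto[OF this] show ?thesis
    by (intro bigoI_tendsto[where c = "L - log_coeff * ln slope"]) auto
qed

definition rel_dev where "rel_dev s = w s / (slope * s) - 1"

lemma rel_dev_tendsto_0: "(rel_dev \<longlongrightarrow> 0) at_top"
proof -
  have "((\<lambda>s. (w s / s) / slope - 1) \<longlongrightarrow> slope / slope - 1) at_top"
    by (intro tendsto_intros w_div_tendsto_slope) (use slope_pos in simp)
  thus ?thesis unfolding rel_dev_def[abs_def] using slope_pos by (simp add: mult.commute)
qed

lemma rel_dev_eq: "s > 0 \<Longrightarrow> rel_dev s = (h\<^sub>1 s - log_coeff * ln s) / (slope * s)"
  unfolding rel_dev_def h\<^sub>1_def using slope_pos by (simp add: field_simps)

lemma rel_dev_bigo: "rel_dev \<in> O[at_top](\<lambda>s. ln s / s)"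
proof -
  have rel_dev_form: "1 / slope * (h\<^sub>1 s / s) - log_coeff / slope * (ln s / s) = rel_dev s"
    if "s > 0" for s
    unfolding rel_dev_eq[OF that] by (simp add: diff_divide_distrib)
  have "(\<lambda>s. h\<^sub>1 s / s) \<in> O[at_top](\<lambda>s. 1 / s)"
    using landau_o.big.mult[OF h\<^sub>1_bounded landau_o.big_refl[of "\<lambda>s::real. 1 / s"]] by simp
  moreover have "(\<lambda>s::real. 1 / s) \<in> O[at_top](\<lambda>s. ln s / s)" by real_asymp
  ultimately have "(\<lambda>s. h\<^sub>1 s / s) \<in> O[at_top](\<lambda>s. ln s / s)"
    by (rule landau_o.big_trans)
  hence "(\<lambda>s. 1 / slope * (h\<^sub>1 s / s) - log_coeff / slope * (ln s / s)) \<in> O[at_top](\<lambda>s. ln s / s)"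
    by (intro sum_in_bigo(2)) (auto simp only: cmult_in_bigo_iff landau_o.big_refl)
  moreover have "eventually (\<lambda>s. 1 / slope * (h\<^sub>1 s / s) - log_coeff / slope * (ln s / s)
                                 = rel_dev s) at_top"
    by (rule eventually_mono[OF eventually_gt_at_top[of 0] rel_dev_form])
  ultimately show ?thesis by (simp add: landau_o.big.in_cong)
qed

lemma ln_one_plus_rel_dev_bigo:
  "(\<lambda>s. ln (1 + rel_dev s) - rel_dev s) \<in> O[at_top](\<lambda>s. (ln s / s)\<^sup>2)"
proof -
  have "eventually (\<lambda>s. \<bar>rel_dev s\<bar> \<le> 1 / 2) at_top"
    using tendstoD[OF rel_dev_tendsto_0, of "1 / 2"]
    by (rule eventually_mono) (simp_all add: dist_real_def)
  hence "eventually (\<lambda>s. norm (ln (1 + rel_dev s) - rel_dev s) \<le> 2 * norm ((rel_dev s)\<^sup>2)) at_top"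
    by eventually_elim (use abs_ln_one_plus_x_minus_x_bound in simp)
  hence "(\<lambda>s. ln (1 + rel_dev s) - rel_dev s) \<in> O[at_top](\<lambda>s. (rel_dev s)\<^sup>2)" by (rule bigoI)
  moreover have "(\<lambda>s. (rel_dev s)\<^sup>2) \<in> O[at_top](\<lambda>s. (ln s / s)\<^sup>2)"
    by (rule landau_o.big_power[OF rel_dev_bigo])
  ultimately show ?thesis by (rule landau_o.big_trans)
qed

text \<open>Writing w = slope s (1 + rel_dev), the relation h1 = E - log_coeff ln (w/s) - g/\<kappa> becomes
  this identity; the log s / s correction comes from the term log_coeff rel_dev, since
  rel_dev = (h1 - log_coeff ln s) / (slope s).\<close>

lemma h\<^sub>1_expansion_identity:
  fixes L :: real
  defines "B \<equiv> log_coeff"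
  assumes "s > 0"
  shows "h\<^sub>1 s - (L - B * ln slope) - B\<^sup>2 / slope * (1 + ln s) / s =
      (E s - L) - B\<^sup>2 / slope * (1 / s) - B / slope * (h\<^sub>1 s / s)
      - B * (ln (1 + rel_dev s) - rel_dev s) - g s / \<kappa>"
proof -
  have "1 + rel_dev s = w s / s / slope" unfolding rel_dev_def using \<open>s > 0\<close> by simp
  hence "ln (w s / s) = ln slope + ln (1 + rel_dev s)"
    using slope_pos w_pos[of s] \<open>s > 0\<close> by (simp add: ln_div ln_mult)
  hence "h\<^sub>1 s = E s - B * ln slope - B * ln (1 + rel_dev s) - g s / \<kappa>"
    using h\<^sub>1_eq[OF \<open>s > 0\<close>] by (simp add: B_def algebra_simps)
  moreover have "B * rel_dev s = B / slope * (h\<^sub>1 s / s) - B\<^sup>2 / slope * (ln s / s)"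
    unfolding rel_dev_eq[OF \<open>s > 0\<close>] B_def using slope_pos \<open>s > 0\<close>
    by (simp add: field_simps power2_eq_square)
  moreover have "B\<^sup>2 / slope * (1 + ln s) / s = B\<^sup>2 / slope * (1 / s) + B\<^sup>2 / slope * (ln s / s)"
    by (simp add: add_divide_distrib distrib_left)
  ultimately show ?thesis by (simp add: algebra_simps)
qed

theorem h\<^sub>1_expansion:
  "\<exists>K. (h\<^sub>1 \<longlongrightarrow> K) at_top \<and>
     (\<lambda>s. h\<^sub>1 s - K - log_coeff\<^sup>2 / slope * (1 + ln s) / s) \<in> o[at_top](\<lambda>s. (1 + ln s) / s)"
proof -
  obtain L where E_lim: "(E \<longlongrightarrow> L) at_top" and E_rate: "(\<lambda>s. E s - L) \<in> O[at_top](\<lambda>s. 1 / s)"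
    using E_tendsto_with_rate by blast
  define B where "B = log_coeff"
  define e where "e s = E s - L" for s
  have inv_small: "(\<lambda>s::real. 1 / s) \<in> o[at_top](\<lambda>s. (1 + ln s) / s)" by real_asymp
  have sq_small: "(\<lambda>s::real. (ln s / s)\<^sup>2) \<in> o[at_top](\<lambda>s. (1 + ln s) / s)" by real_asymp
  have h\<^sub>1_div: "(\<lambda>s. h\<^sub>1 s / s) \<in> O[at_top](\<lambda>s. 1 / s)"
    using landau_o.big.mult[OF h\<^sub>1_bounded landau_o.big_refl[of "\<lambda>s::real. 1 / s"]] by simp
  have "(\<lambda>s. e s - B\<^sup>2 / slope * (1 / s) - B / slope * (h\<^sub>1 s / s)
      - B * (ln (1 + rel_dev s) - rel_dev s) - g s / \<kappa>) \<in> o[at_top](\<lambda>s. (1 + ln s) / s)"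
  proof (intro sum_in_smallo)
    show "e \<in> o[at_top](\<lambda>s. (1 + ln s) / s)"
      using E_rate inv_small unfolding e_def[abs_def] by (rule landau_o.big_small_trans)
    show "(\<lambda>s. B\<^sup>2 / slope * (1 / s)) \<in> o[at_top](\<lambda>s. (1 + ln s) / s)"
      using inv_small by (simp only: cmult_in_smallo_iff) blast
    show "(\<lambda>s. B / slope * (h\<^sub>1 s / s)) \<in> o[at_top](\<lambda>s. (1 + ln s) / s)"
      using landau_o.big_small_trans[OF h\<^sub>1_div inv_small] by (simp only: cmult_in_smallo_iff) blast
    show "(\<lambda>s. B * (ln (1 + rel_dev s) - rel_dev s)) \<in> o[at_top](\<lambda>s. (1 + ln s) / s)"
      using landau_o.big_small_trans[OF ln_one_plus_rel_dev_bigo sq_small]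
      by (simp only: cmult_in_smallo_iff) blast
    show "(\<lambda>s. g s / \<kappa>) \<in> o[at_top](\<lambda>s. (1 + ln s) / s)"
      using landau_o.big_small_trans[OF g_bigo inv_small]
      by (simp only: divide_inverse cmult_in_smallo_iff') blast
  qed
  moreover have "eventually (\<lambda>s. e s - B\<^sup>2 / slope * (1 / s) - B / slope * (h\<^sub>1 s / s)
      - B * (ln (1 + rel_dev s) - rel_dev s) - g s / \<kappa>
      = h\<^sub>1 s - (L - B * ln slope) - B\<^sup>2 / slope * (1 + ln s) / s) at_top"
    using eventually_gt_at_top[of 0] by (rule eventually_mono)
      (unfold e_def B_def, rule h\<^sub>1_expansion_identity[symmetric])
  ultimately have "(\<lambda>s. h\<^sub>1 s - (L - B * ln slope) - B\<^sup>2 / slope * (1 + ln s) / s)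
                     \<in> o[at_top](\<lambda>s. (1 + ln s) / s)"
    by (simp add: landau_o.small.in_cong)
  thus ?thesis using h\<^sub>1_tendsto[OF E_lim] unfolding B_def by blast
qed

end

section \<open>Radial solutions\<close>

lemma has_real_derivative_along_ray:
  fixes F :: "'a::real_normed_vector \<Rightarrow> real"
  assumes "(F has_derivative L) (at (t *\<^sub>R e))"
  shows "((\<lambda>t. F (t *\<^sub>R e)) has_real_derivative L e) (at t)"
proof -
  have ray: "((\<lambda>t. t *\<^sub>R e) has_derivative (\<lambda>h. h *\<^sub>R e)) (at t)"
    by (auto intro!: derivative_eq_intros)
  have "((\<lambda>t. F (t *\<^sub>R e)) has_derivative (\<lambda>h. L (h *\<^sub>R e))) (at t)"
    using has_derivative_compose[OF ray assms] .
  moreover have "(\<lambda>h. L (h *\<^sub>R e)) = (*) (L e)"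
    using linear_scale[OF has_derivative_linear[OF assms]] by (auto simp: mult.commute)
  ultimately show ?thesis unfolding has_field_derivative_def by simp
qed

lemma radial_gradient:
  fixes U :: "'a::real_inner \<Rightarrow> real"
  assumes radial: "\<And>y. U y = f (norm y)"
    and U_deriv: "(U has_derivative (\<lambda>h. DU \<bullet> h)) (at y)"
    and f_deriv: "(f has_real_derivative p) (at (norm y))"
    and "y \<noteq> 0"
  shows "DU = (p / norm y) *\<^sub>R y"
proof -
  have "((\<lambda>y. f (norm y)) has_derivative (\<lambda>h. p * (h \<bullet> sgn y))) (at y)"
    using has_derivative_compose[OF has_derivative_norm[OF \<open>y \<noteq> 0\<close>], of f "(*) p"] f_deriv
    unfolding has_field_derivative_def by simp
  moreover have "(\<lambda>y. f (norm y)) = U" using radial by auto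
  ultimately have "(U has_derivative (\<lambda>h. p * (h \<bullet> sgn y))) (at y)" by simp
  from has_derivative_unique[OF U_deriv this]
  have "\<And>h. DU \<bullet> h = p * (h \<bullet> sgn y)" by metis
  hence "\<forall>h. DU \<bullet> h = ((p / norm y) *\<^sub>R y) \<bullet> h"
    by (simp add: sgn_div_norm inner_commute divide_inverse mult.assoc)
  with vector_eq_rdot show ?thesis by (rule iffD1)
qed

lemma radial_hessian_trace:
  fixes DU :: "real^'n \<Rightarrow> real^'n" and M :: "real^'n^'n"
  assumes grad: "\<And>y. y \<noteq> 0 \<Longrightarrow> DU y = (p (norm y) / norm y) *\<^sub>R y"
    and DU_deriv: "(DU has_derivative (\<lambda>h. M *v h)) (at x)"
    and p_deriv: "(p has_real_derivative p') (at (norm x))"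
    and "x \<noteq> 0"
  shows "(\<Sum>i\<in>UNIV. M $ i $ i) = p' + (real CARD('n) - 1) * p (norm x) / norm x"
proof -
  define r where "r = norm x"
  have "r > 0" using \<open>x \<noteq> 0\<close> unfolding r_def by simp
  define \<psi> where "\<psi> t = p t / t" for t
  define \<psi>' where "\<psi>' = (p' * r - p r) / r\<^sup>2"
  have "(\<psi> has_real_derivative \<psi>') (at r)"
    unfolding \<psi>_def[abs_def] \<psi>'_def using p_deriv \<open>r > 0\<close> unfolding r_def
    by (auto intro!: derivative_eq_intros simp: power2_eq_square)
  hence \<psi>_norm: "((\<lambda>y. \<psi> (norm y)) has_derivative (\<lambda>h. \<psi>' * (h \<bullet> sgn x))) (at x)"
    using has_derivative_compose[OF has_derivative_norm[OF \<open>x \<noteq> 0\<close>], of \<psi> "(*) \<psi>'"]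
    unfolding has_field_derivative_def r_def by simp
  have scaled: "((\<lambda>y. \<psi> (norm y) *\<^sub>R y) has_derivative
                   (\<lambda>h. \<psi> r *\<^sub>R h + (\<psi>' * (h \<bullet> sgn x)) *\<^sub>R x)) (at x)"
    using has_derivative_scaleR[OF \<psi>_norm has_derivative_ident] unfolding r_def by simp
  have "(DU has_derivative (\<lambda>h. \<psi> r *\<^sub>R h + (\<psi>' * (h \<bullet> sgn x)) *\<^sub>R x)) (at x)"
  proof (rule has_derivative_transform_within_open[OF scaled, of "- {0}"])
    show "\<psi> (norm y) *\<^sub>R y = DU y" if "y \<in> - {0}" for y
      using grad[of y] that unfolding \<psi>_def by simp
    show "open (- {0 :: real^'n})" by auto
  qed (use \<open>x \<noteq> 0\<close> in simp)
  from has_derivative_unique[OF DU_deriv this]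
  have M: "\<And>h. M *v h = \<psi> r *\<^sub>R h + (\<psi>' * (h \<bullet> sgn x)) *\<^sub>R x" by metis
  have "(\<Sum>i\<in>UNIV. M $ i $ i) = (\<Sum>i\<in>UNIV. \<psi> r + \<psi>' * (sgn x $ i * x $ i))"
  proof (rule sum.cong[OF refl])
    fix i
    have "M $ i $ i = (M *v axis i 1) $ i" by (simp add: matrix_vector_mult_basis column_def)
    thus "M $ i $ i = \<psi> r + \<psi>' * (sgn x $ i * x $ i)" unfolding M by (simp add: inner_axis')
  qed
  also have "\<dots> = real CARD('n) * \<psi> r + \<psi>' * (sgn x \<bullet> x)"
    by (simp add: sum.distrib sum_distrib_left inner_vec_def)
  also have "sgn x \<bullet> x = r" unfolding r_def using \<open>x \<noteq> 0\<close>
    by (simp add: sgn_div_norm power2_norm_eq_inner[symmetric] power2_eq_square)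
  also have "real CARD('n) * \<psi> r + \<psi>' * r = p' + (real CARD('n) - 1) * p r / r"
    unfolding \<psi>_def \<psi>'_def using \<open>r > 0\<close> by (simp add: field_simps power2_eq_square)
  finally show ?thesis unfolding r_def .
qed

lemma radial_profile_ode:
  fixes V :: "real^'n \<Rightarrow> real" and v :: "real \<Rightarrow> real" and m \<beta> :: real
  defines "k \<equiv> real CARD('n) - 1"
  assumes radial: "\<And>x. V x = v (norm x)" and pos: "\<And>x. V x > 0"
    and sol: "classical_sol m \<beta> V"
  shows "\<exists>v' p p'. (\<forall>t>0. (v has_real_derivative v' t) (at t) \<and>
      ((\<lambda>t. v t powr m) has_real_derivative p t) (at t) \<and> (p has_real_derivative p' t) (at t) \<and>
      k / m * (p' t + k * p t / t) + 2 * \<beta> / (1 - m) * v t + \<beta> * (t * v' t) = 0) \<and>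
    ((\<lambda>t. t * p t / v t powr m) \<longlongrightarrow> 0) (at_right 0)"
proof -
  obtain DV DU and D2U :: "real^'n \<Rightarrow> real^'n^'n" where
    V_cont: "continuous_on UNIV V" and DU_cont: "continuous_on UNIV DU" and
    V_deriv: "\<And>x. (V has_derivative (\<lambda>h. DV x \<bullet> h)) (at x)" and
    U_deriv: "\<And>x. ((\<lambda>y. V y powr m) has_derivative (\<lambda>h. DU x \<bullet> h)) (at x)" and
    DU_deriv: "\<And>x. (DU has_derivative (\<lambda>h. D2U x *v h)) (at x)" and
    eq: "\<And>x. k / m * (\<Sum>i\<in>UNIV. D2U x $ i $ i) + 2 * \<beta> / (1 - m) * V x + \<beta> * (x \<bullet> DV x) = 0"
    using sol unfolding classical_sol_def k_def by blast
  define e :: "real^'n" where "e = axis undefined 1"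
  have "norm e = 1" unfolding e_def by simp
  have V_ray: "V (t *\<^sub>R e) = v t" if "t \<ge> 0" for t
    using radial \<open>norm e = 1\<close> that by simp
  define v' where "v' t = DV (t *\<^sub>R e) \<bullet> e" for t
  define p where "p t = DU (t *\<^sub>R e) \<bullet> e" for t
  define p' where "p' t = (D2U (t *\<^sub>R e) *v e) \<bullet> e" for t
  have v_ray_deriv: "((\<lambda>t. V (t *\<^sub>R e)) has_real_derivative v' t) (at t)" for t
    unfolding v'_def using has_real_derivative_along_ray[OF V_deriv] by simp
  have u_ray_deriv: "((\<lambda>t. V (t *\<^sub>R e) powr m) has_real_derivative p t) (at t)" for t
    unfolding p_def using has_real_derivative_along_ray[OF U_deriv] by simp
  have p_deriv: "(p has_real_derivative p' t) (at t)" for t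
    unfolding p_def[abs_def] p'_def
    using has_real_derivative_along_ray[OF has_derivative_inner_left[OF DU_deriv]] by simp
  have grad: "DU y = (p (norm y) / norm y) *\<^sub>R y" if "y \<noteq> 0" for y
  proof (rule radial_gradient[OF _ U_deriv u_ray_deriv that])
    show "V y powr m = V (norm y *\<^sub>R e) powr m" for y using V_ray radial by simp
  qed
  have ode: "(v has_real_derivative v' t) (at t) \<and>
      ((\<lambda>t. v t powr m) has_real_derivative p t) (at t) \<and> (p has_real_derivative p' t) (at t) \<and>
      k / m * (p' t + k * p t / t) + 2 * \<beta> / (1 - m) * v t + \<beta> * (t * v' t) = 0" if "t > 0" for t
  proof -
    define x where "x = t *\<^sub>R e"
    have "x \<noteq> 0" "norm x = t" unfolding x_def using that \<open>norm e = 1\<close> by auto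
    have "(\<Sum>i\<in>UNIV. D2U x $ i $ i) = p' t + k * p t / t"
      using radial_hessian_trace[OF grad DU_deriv p_deriv \<open>x \<noteq> 0\<close>] \<open>norm x = t\<close>
      unfolding k_def by simp
    moreover have "x \<bullet> DV x = t * v' t" unfolding x_def v'_def by (simp add: inner_commute)
    moreover have "V x = v t" unfolding x_def using V_ray that by simp
    moreover have "(v has_real_derivative v' t) (at t)"
      by (rule has_field_derivative_transform_within_open[OF v_ray_deriv, of "{0<..}"])
         (use that V_ray in auto)
    moreover have "((\<lambda>t. v t powr m) has_real_derivative p t) (at t)"
      by (rule has_field_derivative_transform_within_open[OF u_ray_deriv, of "{0<..}"])
         (use that V_ray in auto)
    ultimately show ?thesis using eq[of x] p_deriv by simp
  qed
  have "((\<lambda>t. t * p t / V (t *\<^sub>R e) powr m) \<longlongrightarrow> 0 * p 0 / V (0 *\<^sub>R e) powr m) (at 0)"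
  proof -
    have ray: "((\<lambda>t::real. t *\<^sub>R e) \<longlongrightarrow> 0 *\<^sub>R e) (at 0)" by (intro tendsto_intros)
    have DU_0: "isCont DU (0 *\<^sub>R e)" and V_0: "isCont V (0 *\<^sub>R e)"
      using DU_cont V_cont by (simp_all add: continuous_on_eq_continuous_at)
    have "((\<lambda>t. DU (t *\<^sub>R e)) \<longlongrightarrow> DU (0 *\<^sub>R e)) (at 0)"
      by (rule isCont_tendsto_compose[OF DU_0 ray])
    moreover have "((\<lambda>t. V (t *\<^sub>R e)) \<longlongrightarrow> V (0 *\<^sub>R e)) (at 0)"
      by (rule isCont_tendsto_compose[OF V_0 ray])
    ultimately show ?thesis unfolding p_def using pos[of "0 *\<^sub>R e"] by (intro tendsto_intros) auto
  qed
  hence "((\<lambda>t. t * p t / V (t *\<^sub>R e) powr m) \<longlongrightarrow> 0) (at_right 0)"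
    using tendsto_within_subset[OF _ subset_UNIV] by fastforce
  moreover have "eventually (\<lambda>t. t * p t / V (t *\<^sub>R e) powr m = t * p t / v t powr m) (at_right 0)"
    using eventually_at_right_less[of 0] by (rule eventually_mono) (simp add: V_ray)
  ultimately have "((\<lambda>t. t * p t / v t powr m) \<longlongrightarrow> 0) (at_right 0)"
    by (simp add: tendsto_cong)
  thus ?thesis using ode by blast
qed

text \<open>The left-hand side is g' in the form produced by the quotient rule.\<close>

lemma log_variables_algebra:
  fixes r u v v' p p' j k m \<beta> :: real
  assumes "r \<noteq> 0" "u \<noteq> 0" "m \<noteq> 0" "j \<noteq> 0" "k \<noteq> 0"
    and v': "v' = p * v / (m * u)"
    and ode: "k / m * (p' + k * p / r) + 2 * \<beta> / j * v + \<beta> * (r * v') = 0"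
  defines "q \<equiv> m / j" and "g \<equiv> 2 + j / m * (r * p / u)"
  shows "j / m * (((r * p + p' * r * r) * u - r * p * (p * r)) / (u * u)) =
     2 * (k - 1 - 4 * q) + 4 * q - (k - 1 - 4 * q) * g - q * g\<^sup>2 - \<beta> / k * g * (r\<^sup>2 * v / u)"
proof -
  have p': "p' = - (m * (2 * \<beta> / j * v + \<beta> * (r * v')) / k) - k * p / r"
    using ode assms(1-5) by (simp add: field_simps)
  show ?thesis unfolding q_def g_def p' v' using assms(1-5)
    by (simp add: field_simps power2_eq_square)
qed

lemma log_variables_system:
  fixes v v' p p' :: "real \<Rightarrow> real" and m \<beta> k s :: real
  assumes "0 < m" "m < 1" "k > 0"
    and v_pos: "\<And>t. 0 < t \<Longrightarrow> 0 < v t"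
    and v_deriv: "\<And>t. 0 < t \<Longrightarrow> (v has_real_derivative v' t) (at t)"
    and u_deriv: "\<And>t. 0 < t \<Longrightarrow> ((\<lambda>t. v t powr m) has_real_derivative p t) (at t)"
    and p_deriv: "\<And>t. 0 < t \<Longrightarrow> (p has_real_derivative p' t) (at t)"
    and ode: "\<And>t. 0 < t \<Longrightarrow>
               k / m * (p' t + k * p t / t) + 2 * \<beta> / (1 - m) * v t + \<beta> * (t * v' t) = 0"
  defines "w \<equiv> \<lambda>s. exp s ^ 2 * v (exp s) powr (1 - m)"
    and "g \<equiv> \<lambda>s. 2 + (1 - m) / m * (exp s * p (exp s) / v (exp s) powr m)"
    and "q \<equiv> m / (1 - m)"
  shows "(w has_real_derivative g s * w s) (at s)"
    and "(g has_real_derivative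
           2 * (k - 1 - 4 * q) + 4 * q - (k - 1 - 4 * q) * g s - q * (g s)\<^sup>2 - \<beta> / k * g s * w s)
         (at s)"
proof -
  define r where "r = exp s"
  define u where "u t = v t powr m" for t
  have "r > 0" unfolding r_def by simp
  have u_pos: "u t > 0" if "t > 0" for t unfolding u_def using v_pos[OF that] by simp
  have "w t = exp t ^ 2 * v (exp t) / u (exp t)" for t
    unfolding w_def u_def using v_pos[of "exp t"] by (simp add: powr_diff)
  hence w_eq: "w = (\<lambda>s. exp s ^ 2 * v (exp s) / u (exp s))" by (simp add: fun_eq_iff)
  have v'_eq: "v' t = p t * v t / (m * u t)" if "t > 0" for t
  proof -
    have "p t = m * v t powr (m - 1) * v' t"
      using DERIV_unique[OF u_deriv[OF that] DERIV_fun_powr[OF v_deriv[OF that] v_pos[OF that]]]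
      by simp
    also have "v t powr (m - 1) = u t / v t"
      unfolding u_def using v_pos[OF that] by (simp add: powr_diff)
    finally show ?thesis using \<open>0 < m\<close> u_pos[OF that] v_pos[OF that] by (simp add: field_simps)
  qed
  have v_exp: "((\<lambda>s. v (exp s)) has_real_derivative v' r * r) (at s)"
    using DERIV_chain2[OF v_deriv DERIV_exp] unfolding r_def by simp
  have u_exp: "((\<lambda>s. u (exp s)) has_real_derivative p r * r) (at s)"
    using DERIV_chain2[OF u_deriv DERIV_exp] unfolding r_def u_def by simp
  have p_exp: "((\<lambda>s. p (exp s)) has_real_derivative p' r * r) (at s)"
    using DERIV_chain2[OF p_deriv DERIV_exp] unfolding r_def by simp
  have "(w has_real_derivative
          ((2 * r * r * v r + r\<^sup>2 * (v' r * r)) * u r - r\<^sup>2 * v r * (p r * r)) / (u r * u r))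
        (at s)"
    unfolding w_eq using u_pos[OF \<open>r > 0\<close>] unfolding r_def
    by (auto intro!: derivative_eq_intros v_exp[unfolded r_def] u_exp[unfolded r_def]
             simp: power2_eq_square)
  moreover have "((2 * r * r * v r + r\<^sup>2 * (v' r * r)) * u r - r\<^sup>2 * v r * (p r * r)) / (u r * u r)
                 = g s * w s"
    unfolding g_def w_eq u_def[symmetric] r_def[symmetric] v'_eq[OF \<open>r > 0\<close>]
    using \<open>r > 0\<close> u_pos[OF \<open>r > 0\<close>] v_pos[OF \<open>r > 0\<close>] \<open>0 < m\<close> \<open>m < 1\<close>
    by (simp add: field_simps power2_eq_square)
  ultimately show "(w has_real_derivative g s * w s) (at s)" by simp
  have "(g has_real_derivative
          (1 - m) / m * (((r * p r + p' r * r * r) * u r - r * p r * (p r * r)) / (u r * u r)))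
        (at s)"
    unfolding g_def u_def[symmetric] using u_pos[OF \<open>r > 0\<close>] \<open>0 < m\<close> unfolding r_def
    by (auto intro!: derivative_eq_intros p_exp[unfolded r_def] u_exp[unfolded r_def]
             simp: field_simps)
  moreover have "(1 - m) / m * (((r * p r + p' r * r * r) * u r - r * p r * (p r * r)) / (u r * u r))
      = 2 * (k - 1 - 4 * q) + 4 * q - (k - 1 - 4 * q) * g s - q * (g s)\<^sup>2 - \<beta> / k * g s * w s"
    unfolding g_def w_eq u_def[symmetric] r_def[symmetric] q_def
    using log_variables_algebra[OF _ _ _ _ _ v'_eq[OF \<open>r > 0\<close>] ode[OF \<open>r > 0\<close>]]
      \<open>r > 0\<close> u_pos[OF \<open>r > 0\<close>] \<open>0 < m\<close> \<open>m < 1\<close> \<open>k > 0\<close>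
    by simp
  ultimately show "(g has_real_derivative
      2 * (k - 1 - 4 * q) + 4 * q - (k - 1 - 4 * q) * g s - q * (g s)\<^sup>2 - \<beta> / k * g s * w s) (at s)"
    by simp
qed

lemma exponent_range:
  fixes n m :: real
  assumes "3 \<le> n" and "m < (n - 2) / n"
  shows "0 < n - 2 - n * m" and "m < 1"
proof -
  show "0 < n - 2 - n * m" using assms by (simp add: field_simps)
  hence "n * m < n * 1" by linarith
  thus "m < 1" using \<open>3 \<le> n\<close> by simp
qed

lemma radial_solution_log_system:
  fixes V :: "real^'n \<Rightarrow> real" and v :: "real \<Rightarrow> real" and m \<beta> :: real
  defines "n \<equiv> real CARD('n)" and "q \<equiv> m / (1 - m)"
  assumes "CARD('n) \<ge> 3" and "0 < m" and "m < (n - 2) / n" and "\<beta> > 0"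
    and radial: "\<And>x. V x = v (norm x)" and pos: "\<And>x. V x > 0"
    and sol: "classical_sol m \<beta> V"
  shows "\<exists>g s\<^sub>0. log_system (\<lambda>s. exp s ^ 2 * v (exp s) powr (1 - m)) g
                   (n - 2 - 4 * q) q (\<beta> / (n - 1)) s\<^sub>0"
proof -
  have "n \<ge> 3" using assms(3) unfolding n_def by simp
  note exponent = exponent_range[OF \<open>n \<ge> 3\<close> \<open>m < (n - 2) / n\<close>]
  have "m < 1" by (fact exponent(2))
  obtain v' p p' where
    ode: "\<And>t. t > 0 \<Longrightarrow> (v has_real_derivative v' t) (at t) \<and>
      ((\<lambda>t. v t powr m) has_real_derivative p t) (at t) \<and> (p has_real_derivative p' t) (at t) \<and>
      (n - 1) / m * (p' t + (n - 1) * p t / t) + 2 * \<beta> / (1 - m) * v t + \<beta> * (t * v' t) = 0"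
    and p_small: "((\<lambda>t. t * p t / v t powr m) \<longlongrightarrow> 0) (at_right 0)"
    using radial_profile_ode[OF radial pos sol] unfolding n_def by blast
  have v_pos: "0 < v t" if "0 < t" for t
    using pos[of "t *\<^sub>R axis undefined 1"] radial[of "t *\<^sub>R axis undefined 1"] that
    by (simp add: norm_scaleR)
  define w where "w s = exp s ^ 2 * v (exp s) powr (1 - m)" for s
  define g where "g s = 2 + (1 - m) / m * (exp s * p (exp s) / v (exp s) powr m)" for s
  have "n - 1 > 0" using \<open>n \<ge> 3\<close> by simp
  have v_deriv: "\<And>t. 0 < t \<Longrightarrow> (v has_real_derivative v' t) (at t)"
    and u_deriv: "\<And>t. 0 < t \<Longrightarrow> ((\<lambda>t. v t powr m) has_real_derivative p t) (at t)"
    and p_deriv: "\<And>t. 0 < t \<Longrightarrow> (p has_real_derivative p' t) (at t)"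
    and ode': "\<And>t. 0 < t \<Longrightarrow>
      (n - 1) / m * (p' t + (n - 1) * p t / t) + 2 * \<beta> / (1 - m) * v t + \<beta> * (t * v' t) = 0"
    using ode by blast+
  note derivs =
    log_variables_system[OF \<open>0 < m\<close> \<open>m < 1\<close> \<open>n - 1 > 0\<close> v_pos v_deriv u_deriv p_deriv ode']
  have "q > 0" unfolding q_def using \<open>0 < m\<close> \<open>m < 1\<close> by simp
  obtain t\<^sub>0 where "t\<^sub>0 > 0" and "\<bar>t\<^sub>0 * p t\<^sub>0 / v t\<^sub>0 powr m\<bar> < 2 * q"
  proof -
    have "eventually (\<lambda>t. 0 < t \<and> \<bar>t * p t / v t powr m\<bar> < 2 * q) (at_right 0)"
      using eventually_conj[OF eventually_at_right_less tendstoD[OF p_small]] \<open>q > 0\<close>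
      by (simp add: dist_real_def)
    hence "\<exists>t. 0 < t \<and> \<bar>t * p t / v t powr m\<bar> < 2 * q"
      using eventually_happens trivial_limit_at_right_real by blast
    thus ?thesis using that by blast
  qed
  have "log_system w g (n - 2 - 4 * q) q (\<beta> / (n - 1)) (ln t\<^sub>0)"
  proof unfold_locales
    show "\<beta> / (n - 1) > 0" using \<open>\<beta> > 0\<close> \<open>n - 1 > 0\<close> by simp
    show "q > 0" by fact
    have "q * (1 - m) = m" unfolding q_def using \<open>m < 1\<close> by simp
    hence "(n - 2 - 4 * q + 2 * q) * (1 - m) = n - 2 - n * m"
      by (simp add: algebra_simps)
    hence "0 < (n - 2 - 4 * q + 2 * q) * (1 - m)" using exponent(1) by simp
    thus "n - 2 - 4 * q + 2 * q > 0" using \<open>m < 1\<close> by (simp add: zero_less_mult_iff)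
    show "w s > 0" for s unfolding w_def using v_pos[of "exp s"] by simp
    show "(w has_real_derivative g s * w s) (at s)" for s
      using derivs(1) unfolding w_def[abs_def] g_def[abs_def] .
    have "n - 1 - 1 - 4 * q = n - 2 - 4 * q" by simp
    thus "(g has_real_derivative 2 * (n - 2 - 4 * q) + 4 * q - (n - 2 - 4 * q) * g s
            - q * (g s)\<^sup>2 - \<beta> / (n - 1) * g s * w s) (at s)" for s
      using derivs(2) unfolding w_def[abs_def] g_def[abs_def] q_def by simp
    have "- 2 * q < t\<^sub>0 * p t\<^sub>0 / v t\<^sub>0 powr m"
      using \<open>\<bar>t\<^sub>0 * p t\<^sub>0 / v t\<^sub>0 powr m\<bar> < 2 * q\<close> unfolding abs_less_iff by linarith
    hence "(1 - m) / m * (- 2 * q) < (1 - m) / m * (t\<^sub>0 * p t\<^sub>0 / v t\<^sub>0 powr m)"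
      using \<open>0 < m\<close> \<open>m < 1\<close> by (intro mult_strict_left_mono) auto
    moreover have "(1 - m) / m * (- 2 * q) = - 2"
      unfolding q_def using \<open>0 < m\<close> \<open>m < 1\<close> by (simp add: field_simps)
    ultimately show "g (ln t\<^sub>0) > 0" unfolding g_def using \<open>t\<^sub>0 > 0\<close> by simp
  qed
  thus ?thesis unfolding w_def[abs_def] by blast
qed

lemma radial_system_constants:
  fixes n m \<beta> :: real
  defines "q \<equiv> m / (1 - m)" and "\<kappa> \<equiv> \<beta> / (n - 1)"
  assumes "3 \<le> n" and "m < (n - 2) / n" and "\<beta> > 0"
    and sys: "log_system w g (n - 2 - 4 * q) q \<kappa> s\<^sub>0"
  shows "log_system.slope (n - 2 - 4 * q) q \<kappa> = 2 * (n - 1) * (n - 2 - n * m) / ((1 - m) * \<beta>)"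
      (is "?a = _")
    and "log_system.log_coeff (n - 2 - 4 * q) \<kappa> = (n - 1) * (n - 2 - (n + 2) * m) / ((1 - m) * \<beta>)"
      (is "?b = _")
    and "(log_system.log_coeff (n - 2 - 4 * q) \<kappa>)\<^sup>2 / log_system.slope (n - 2 - 4 * q) q \<kappa>
           = (n - 1) * (n - 2 - (n + 2) * m)\<^sup>2 / (2 * (n - 2 - n * m) * (1 - m) * \<beta>)"
proof -
  note exponent = exponent_range[OF \<open>3 \<le> n\<close> \<open>m < (n - 2) / n\<close>]
  define j where "j = 1 - m"
  have "j > 0" unfolding j_def using exponent(2) by simp
  have q: "q = m / j" unfolding q_def j_def ..
  have "?a = 2 * (n - 1) * ((n - 2) * j - 2 * m) / (j * \<beta>)"
    unfolding log_system.slope_def[OF sys] log_system.A_def[OF sys] unfolding \<kappa>_def q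
    using \<open>j > 0\<close> \<open>3 \<le> n\<close> \<open>\<beta> > 0\<close> by (simp add: field_simps)
  also have "(n - 2) * j - 2 * m = n - 2 - n * m" unfolding j_def by (simp add: algebra_simps)
  finally show a: "?a = 2 * (n - 1) * (n - 2 - n * m) / ((1 - m) * \<beta>)" by (simp add: j_def)
  have "?b = (n - 1) * ((n - 2) * j - 4 * m) / (j * \<beta>)"
    unfolding log_system.log_coeff_def[OF sys] unfolding \<kappa>_def q
    using \<open>j > 0\<close> \<open>3 \<le> n\<close> \<open>\<beta> > 0\<close> by (simp add: field_simps)
  also have "(n - 2) * j - 4 * m = n - 2 - (n + 2) * m" unfolding j_def by (simp add: algebra_simps)
  finally show b: "?b = (n - 1) * (n - 2 - (n + 2) * m) / ((1 - m) * \<beta>)" by (simp add: j_def)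
  have frac: "\<And>X Y Z W b :: real. X \<noteq> 0 \<Longrightarrow> Y \<noteq> 0 \<Longrightarrow> Z \<noteq> 0 \<Longrightarrow> b \<noteq> 0 \<Longrightarrow>
     (X * W / (Z * b))\<^sup>2 / (2 * X * Y / (Z * b)) = X * W\<^sup>2 / (2 * Y * Z * b)"
    by (simp add: field_simps power2_eq_square)
  show "?b\<^sup>2 / ?a = (n - 1) * (n - 2 - (n + 2) * m)\<^sup>2 / (2 * (n - 2 - n * m) * (1 - m) * \<beta>)"
    unfolding a b using exponent \<open>3 \<le> n\<close> \<open>\<beta> > 0\<close> by (intro frac) auto
qed

theorem corollary2p6:
  fixes V :: "real^'n \<Rightarrow> real" and v :: "real \<Rightarrow> real"
    and m lam \<beta> :: real
  defines "n \<equiv> real CARD('n)"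
  assumes n3: "CARD('n) \<ge> 3"
    and m_pos: "0 < m" and m_lt: "m < (n - 2) / n" and m_ne: "m \<noteq> (n - 2) / (n + 2)"
    and lam: "lam > 0" and beta: "\<beta> > 0"
    and radial: "\<forall>x. V x = v (norm x)"
    and pos: "\<forall>x. V x > 0"
    and sol: "classical_sol m \<beta> V"
    and init: "v 0 = lam"
  shows "\<exists>K::real.
     let w = (\<lambda>s. exp s ^ 2 * v (exp s) powr (1 - m));
         h = (\<lambda>s. w s - 2 * (n - 1) * (n - 2 - n * m) / ((1 - m) * \<beta>) * s);
         h1 = (\<lambda>s. h s + (n - 1) * (n - 2 - (n + 2) * m) / ((1 - m) * \<beta>) * ln s);
         C = (n - 1) * (n - 2 - (n + 2) * m)^2 / (2 * (n - 2 - n * m) * (1 - m) * \<beta>)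
     in (h1 \<longlongrightarrow> K) at_top \<and>
        (\<lambda>s. h1 s - K - C * (1 + ln s) / s) \<in> o[at_top](\<lambda>s. (1 + ln s) / s)"
proof -
  define q where "q = m / (1 - m)"
  have "3 \<le> n" using n3 unfolding n_def by simp
  obtain g s\<^sub>0 where
    "log_system (\<lambda>s. exp s ^ 2 * v (exp s) powr (1 - m)) g (n - 2 - 4 * q) q (\<beta> / (n - 1)) s\<^sub>0"
    using radial_solution_log_system[OF n3 m_pos m_lt[unfolded n_def] beta] radial pos sol
    unfolding n_def q_def by blast
  then interpret S: log_system "\<lambda>s. exp s ^ 2 * v (exp s) powr (1 - m)" g
    "n - 2 - 4 * q" q "\<beta> / (n - 1)" s\<^sub>0 .
  note constants =
    radial_system_constants[OF \<open>3 \<le> n\<close> m_lt beta S.log_system_axioms[unfolded q_def],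
      folded q_def]
  obtain K where "(S.h\<^sub>1 \<longlongrightarrow> K) at_top"
    and "(\<lambda>s. S.h\<^sub>1 s - K - S.log_coeff\<^sup>2 / S.slope * (1 + ln s) / s) \<in> o[at_top](\<lambda>s. (1 + ln s) / s)"
    using S.h\<^sub>1_expansion by blast
  thus ?thesis unfolding Let_def constants(3) unfolding S.h\<^sub>1_def[abs_def] constants(1,2)
    by (intro exI[of _ K]) simp
qed

end
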